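(* Let $\Omega=[0,1)$, $\mathcal F$ its Borel $\sigma$-field, $\mathbb P$ Lebesgue measure. For $n\ge 2$ let $B_n:=\bigcup_{k=0}^{2^{n-2}-1}\left[\frac{2k}{2^n},\frac{2k+1}{2^n}\right)$ and let $\mathcal B_n=\sigma(\{B_n\}\cup\mathcal N)$; let $\mathcal B_0=\sigma(\mathcal N)$ (the trivial $\sigma$-subfield). Let $x=(\sqrt6-1)/8$ and $A:=\left[\tfrac{3}{16},\tfrac{7}{16}\right)\cup\left[1-x,1\right)$, $B:=\left[\tfrac{1}{16},\tfrac{5}{16}\right)\cup\left[1-2x+\tfrac1{16},1-x+\tfrac1{16}\right)$. Then: (i) $\mathcal B_n\to\mathcal B_0$ weakly, and $\mathcal B_0=\mathcal B_{\mathbb P}:=\{C\in\mathcal F:\lim_{n\to\infty}\inf_{D\in\mathcal B_n}\mathbb P(C\triangle D)=0\}$; (ii) for every $n\ge 4$, $A$ and $B$ are conditionally independent given $\mathcal B_n$, i.e. $\mathbb P$-a.s. $\mathbb P_{\mathcal B_n}\mathbb 1_{A\cap B}=\mathbb P_{\mathcal B_n}\mathbb 1_A\,\mathbb P_{\mathcal B_n}\mathbb 1_B$; (iii) $A$ and $B$ are not independent under $\mathbb P$ (hence not conditionally independent given $\mathcal B_0$). Consequently conditional independence is not preserved in the limit under weak convergence, even when the weak limit is taken to be $\mathcal B_{\mathbb P}$.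
   Context: $\mathcal N:=\{F\in\mathcal F:\mathbb P(F)=0\}$. For a $\sigma$-subfield $\mathcal A$ and integrable $f$, $\mathbb P_{\mathcal A}f:=\mathbb E^{\mathbb P}[f\mid\mathcal A]$. For $\mathbb P$-complete sub-$\sigma$-fields $(\mathcal B_n)_{n\in\mathbb N_0}$, $\mathcal B_n\to\mathcal B_0$ weakly if $\mathbb P_{\mathcal B_n}\mathbb 1_C\to\mathbb 1_C$ in $\mathbb P$-probability for every $C\in\mathcal B_0$. *)

theory Defs
  imports "HOL-Probability.Probability"
begin

definition PP :: "real measure" where
  "PP = restrict_space lborel {0..<1}"

text \<open>B_n = union over k = 0 .. 2^(n-2)-1 of [2k/2^n, (2k+1)/2^n) (meaningful for n >= 2).\<close>
definition Bset :: "nat \<Rightarrow> real set" where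
  "Bset n = (\<Union>k\<in>{0..<2^(n-2)}. {2 * real k / 2^n ..< (2 * real k + 1) / 2^n})"

definition Bfield :: "nat \<Rightarrow> real measure" where
  "Bfield n = sigma (space PP) (insert (Bset n) (null_sets PP))"

definition B0field :: "real measure" where
  "B0field = sigma (space PP) (null_sets PP)"

definition conv_in_prob :: "'a measure \<Rightarrow> (nat \<Rightarrow> 'a \<Rightarrow> real) \<Rightarrow> ('a \<Rightarrow> real) \<Rightarrow> bool" where
  "conv_in_prob M f g \<longleftrightarrow>
     (\<forall>e>0. (\<lambda>n. measure M {x \<in> space M. e < \<bar>f n x - g x\<bar>}) \<longlonglongrightarrow> 0)"

definition weak_conv :: "'a measure \<Rightarrow> (nat \<Rightarrow> 'a measure) \<Rightarrow> 'a measure \<Rightarrow> bool" where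
  "weak_conv M Bs B0 \<longleftrightarrow>
     (\<forall>C\<in>sets B0. conv_in_prob M (\<lambda>n. real_cond_exp M (Bs n) (indicator C)) (indicator C))"

definition BP_field :: "'a measure \<Rightarrow> (nat \<Rightarrow> 'a measure) \<Rightarrow> 'a set set" where
  "BP_field M Bs = {C \<in> sets M.
     (\<lambda>n. INF D\<in>sets (Bs n). measure M ((C - D) \<union> (D - C))) \<longlonglongrightarrow> 0}"

definition xx :: real where "xx = (sqrt 6 - 1) / 8"

definition Aset :: "real set" where
  "Aset = {3/16 ..< 7/16} \<union> {1 - xx ..< 1}"

definition Bset' :: "real set" where
  "Bset' = {1/16 ..< 5/16} \<union> {1 - 2*xx + 1/16 ..< 1 - xx + 1/16}"

end

theory Submission
  imports Defs
begin

text \<open>Every sigma-field Bfield n is generated, up to null sets, by the single set Bset n, so its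
  members are a.e. one of the four sets {}, Bset n, its complement and the whole space, and
  conditional expectations given it are two-valued with explicit values.  Part (ii) is then an
  identity between interval lengths: on Bset n the events A and B meet in measure 1/16 against
  1/8 each, and off Bset n the choice of xx makes (1/8 + xx)^2 = 3/32 balance the product.
  The trivial sigma-field is contained in every Bfield n, which gives weak convergence and one
  inclusion of B_P.  Conversely, Bset n and Bset (n+1) overlap in measure 1/8, so the atoms of
  consecutive fields are at symmetric-difference distance at least 1/8 apart except for the
  trivial ones; a set approximable within 1/16 in both fields therefore has probability 0 or 1.\<close>

lemma integral_indicator_mult_indicator:
  assumes "A \<in> sets M" "B \<in> sets M"
  shows "(\<integral>x. indicator A x * indicator B x \<partial>M) = measure M (A \<inter> B)"
proof -
  have "(\<lambda>x. indicator A x * indicator B x :: real) = indicator (A \<inter> B)"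
    by (simp add: fun_eq_iff indicator_inter_arith)
  moreover have "A \<inter> B \<inter> space M = A \<inter> B"
    using assms sets.sets_into_space by blast
  ultimately show ?thesis by simp
qed

lemma (in finite_measure) measure_Int_sym_diff_le:
  assumes "X \<in> sets M" "Y \<in> sets M" "T \<in> sets M"
  shows "\<bar>measure M (X \<inter> T) - measure M (Y \<inter> T)\<bar> \<le> measure M (sym_diff X Y)"
proof -
  have "measure M (X \<inter> T) \<le> measure M ((Y \<inter> T) \<union> sym_diff X Y)"
   and "measure M (Y \<inter> T) \<le> measure M ((X \<inter> T) \<union> sym_diff X Y)"
    using assms by (auto intro!: finite_measure_mono)
  moreover have "measure M ((Y \<inter> T) \<union> sym_diff X Y) \<le> measure M (Y \<inter> T) + measure M (sym_diff X Y)"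
   and "measure M ((X \<inter> T) \<union> sym_diff X Y) \<le> measure M (X \<inter> T) + measure M (sym_diff X Y)"
    using assms by (auto intro!: measure_Un_le)
  ultimately show ?thesis by linarith
qed

lemma (in finite_measure) measure_sym_diff_triangle:
  assumes "X \<in> sets M" "Y \<in> sets M" "Z \<in> sets M"
  shows "measure M (sym_diff X Z) \<le> measure M (sym_diff X Y) + measure M (sym_diff Y Z)"
proof -
  have "measure M (sym_diff X Z) \<le> measure M (sym_diff X Y \<union> sym_diff Y Z)"
    using assms by (intro finite_measure_mono) auto
  also have "\<dots> \<le> measure M (sym_diff X Y) + measure M (sym_diff Y Z)"
    using assms by (intro measure_Un_le) auto
  finally show ?thesis .
qed

section \<open>Sigma-fields generated by one event and the null sets\<close>

context prob_space
begin

lemma sets_sigma_insert_null_sets: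
  assumes "G \<in> sets M"
  shows "sets (sigma (space M) (insert G (null_sets M))) = sigma_sets (space M) (insert G (null_sets M))"
  using assms sets.sets_into_space by (intro sets_measure_of) (auto dest: null_setsD2)

lemma sigma_insert_null_sets_AE_cases:
  assumes G: "G \<in> sets M" and D: "D \<in> sets (sigma (space M) (insert G (null_sets M)))"
  shows "D \<in> sets M \<and> (\<exists>a b. AE x in M. (x \<in> D) = (a \<and> x \<in> G \<or> b \<and> x \<notin> G))"
proof -
  from D have "D \<in> sigma_sets (space M) (insert G (null_sets M))"
    using sets_sigma_insert_null_sets[OF G] by simp
  then show ?thesis
  proof induction
    case (Basic a)
    then show ?case
    proof
      assume "a = G"
      then show ?thesis using G by (intro conjI exI[of _ True] exI[of _ False]) auto
    next
      assume "a \<in> null_sets M"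
      then show ?thesis
        by (intro conjI exI[of _ False] exI[of _ False]) (auto dest: null_setsD2 intro: AE_not_in)
    qed
  next
    case Empty
    then show ?case by (intro conjI exI[of _ False] exI[of _ False]) auto
  next
    case (Compl a)
    then obtain p q where "AE x in M. (x \<in> a) = (p \<and> x \<in> G \<or> q \<and> x \<notin> G)" by blast
    then have "AE x in M. (x \<in> space M - a) = (\<not> p \<and> x \<in> G \<or> \<not> q \<and> x \<notin> G)"
      using AE_space by eventually_elim auto
    then show ?case using Compl by blast
  next
    case (Union A)
    then have "\<forall>i. \<exists>p q. AE x in M. (x \<in> A i) = (p \<and> x \<in> G \<or> q \<and> x \<notin> G)"
      by blast
    then obtain p q where "\<And>i. AE x in M. (x \<in> A i) = (p i \<and> x \<in> G \<or> q i \<and> x \<notin> G)"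
      by metis
    then have "AE x in M. \<forall>i. (x \<in> A i) = (p i \<and> x \<in> G \<or> q i \<and> x \<notin> G)"
      by (simp add: AE_all_countable)
    then have "AE x in M. (x \<in> (\<Union>i. A i)) = ((\<exists>i. p i) \<and> x \<in> G \<or> (\<exists>i. q i) \<and> x \<notin> G)"
      by eventually_elim auto
    then show ?case using Union by blast
  qed
qed

lemma sigma_finite_subalgebra_sigma_insert_null_sets:
  assumes G: "G \<in> sets M"
  shows "sigma_finite_subalgebra M (sigma (space M) (insert G (null_sets M)))"
proof (rule finite_measure_subalgebra_is_sigma_finite)
  have "subalgebra M (sigma (space M) (insert G (null_sets M)))"
    unfolding subalgebra_def
  proof
    show "space (sigma (space M) (insert G (null_sets M))) = space M"
      using G sets.sets_into_space by (intro space_measure_of) (auto dest: null_setsD2)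
    show "sets (sigma (space M) (insert G (null_sets M))) \<subseteq> sets M"
      using sigma_insert_null_sets_AE_cases[OF G] by blast
  qed
  then show "finite_measure_subalgebra M (sigma (space M) (insert G (null_sets M)))"
    unfolding finite_measure_subalgebra_def finite_measure_subalgebra_axioms_def
    using finite_measure_axioms by auto
qed

lemma integral_indicator_mult_AE_cases:
  fixes h :: "'a \<Rightarrow> real"
  assumes G[measurable]: "G \<in> sets M" and h: "integrable M h" and D[measurable]: "D \<in> sets M"
    and D_cases: "AE x in M. (x \<in> D) = (a \<and> x \<in> G \<or> b \<and> x \<notin> G)"
  shows "(\<integral>x. indicator D x * h x \<partial>M) =
     of_bool a * (\<integral>x. indicator G x * h x \<partial>M) + of_bool b * (\<integral>x. indicator (space M - G) x * h x \<partial>M)"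
proof -
  have [measurable]: "h \<in> borel_measurable M" using h by auto
  have "(\<integral>x. indicator D x * h x \<partial>M) =
      (\<integral>x. of_bool a * (indicator G x * h x) + of_bool b * (indicator (space M - G) x * h x) \<partial>M)"
  proof (rule integral_cong_AE)
    show "AE x in M. indicator D x * h x =
        of_bool a * (indicator G x * h x) + of_bool b * (indicator (space M - G) x * h x)"
      using D_cases AE_space by eventually_elim (auto simp: indicator_def)
  qed measurable
  also have "\<dots> = of_bool a * (\<integral>x. indicator G x * h x \<partial>M) + of_bool b * (\<integral>x. indicator (space M - G) x * h x \<partial>M)"
    using integrable_mult_indicator[OF G h] integrable_mult_indicator[of "space M - G", OF _ h] by simp
  finally show ?thesis .
qed

lemma real_cond_exp_sigma_insert_null_sets:
  fixes f :: "'a \<Rightarrow> real"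
  assumes G[measurable]: "G \<in> sets M" and f: "integrable M f"
  shows "AE x in M. real_cond_exp M (sigma (space M) (insert G (null_sets M))) f x =
     (if x \<in> G then (\<integral>x. indicator G x * f x \<partial>M) / prob G
      else (\<integral>x. indicator (space M - G) x * f x \<partial>M) / prob (space M - G))"
proof -
  let ?F = "sigma (space M) (insert G (null_sets M))"
  interpret F: sigma_finite_subalgebra M ?F
    by (rule sigma_finite_subalgebra_sigma_insert_null_sets[OF G])
  define c1 where "c1 = (\<integral>x. indicator G x * f x \<partial>M) / prob G"
  define c2 where "c2 = (\<integral>x. indicator (space M - G) x * f x \<partial>M) / prob (space M - G)"
  define g where "g = (\<lambda>x. if x \<in> G then c1 else c2)"
  have [measurable]: "G \<in> sets ?F"
    using sets_sigma_insert_null_sets[OF G] by auto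
  have g_meas: "g \<in> borel_measurable ?F" "g \<in> borel_measurable M"
    unfolding g_def by measurable
  have g_int: "integrable M g"
    by (rule integrable_const_bound[where B="\<bar>c1\<bar> + \<bar>c2\<bar>"]) (auto simp: g_def g_meas)
  \<comment> \<open>the quotients are junk on null sets, where both sides vanish anyway\<close>
  have mean_times_measure: "(\<integral>x. indicator H x * f x \<partial>M) / prob H * prob H = (\<integral>x. indicator H x * f x \<partial>M)"
    if H: "H \<in> sets M" for H
  proof (cases "prob H = 0")
    case True
    then have "AE x in M. x \<notin> H" using H by (simp add: prob_eq_0)
    then have "(\<integral>x. indicator H x * f x \<partial>M) = (\<integral>x. 0 \<partial>M)"
      using f H by (intro integral_cong_AE) (auto elim!: eventually_mono)
    then show ?thesis using True by simp
  qed simp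
  have "(\<lambda>x. indicator G x * g x) = (\<lambda>x. c1 * indicator G x)"
   and "(\<lambda>x. indicator (space M - G) x * g x) = (\<lambda>x. c2 * indicator (space M - G) x)"
    by (auto simp: g_def indicator_def fun_eq_iff)
  then have g_on_G: "(\<integral>x. indicator G x * g x \<partial>M) = c1 * prob G"
    and g_off_G: "(\<integral>x. indicator (space M - G) x * g x \<partial>M) = c2 * prob (space M - G)"
    using G sets.sets_into_space by (simp_all add: Int_absorb2)
  have "AE x in M. real_cond_exp M ?F f x = g x"
  proof (rule F.real_cond_exp_charact)
    fix A assume "A \<in> sets ?F"
    from sigma_insert_null_sets_AE_cases[OF G this] obtain a b where
      A: "A \<in> sets M" and A_cases: "AE x in M. (x \<in> A) = (a \<and> x \<in> G \<or> b \<and> x \<notin> G)"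
      by blast
    show "(\<integral>x\<in>A. f x \<partial>M) = (\<integral>x\<in>A. g x \<partial>M)"
      unfolding set_lebesgue_integral_def real_scaleR_def
      using integral_indicator_mult_AE_cases[OF G f A A_cases]
        integral_indicator_mult_AE_cases[OF G g_int A A_cases] g_on_G g_off_G
        mean_times_measure[OF G] mean_times_measure[of "space M - G"]
      by (simp add: c1_def c2_def)
  qed (use f g_int g_meas in auto)
  then show ?thesis unfolding g_def c1_def c2_def .
qed

lemma real_cond_exp_indicator_sigma_insert_null_sets:
  assumes G: "G \<in> sets M" and S: "S \<in> sets M"
  shows "AE x in M. real_cond_exp M (sigma (space M) (insert G (null_sets M))) (indicator S) x =
     (if x \<in> G then prob (G \<inter> S) / prob G else prob ((space M - G) \<inter> S) / prob (space M - G))"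
proof -
  have Gc: "space M - G \<in> sets M" using G by auto
  have "integrable M (indicator S :: 'a \<Rightarrow> real)"
    using S by (simp add: emeasure_finite less_top[symmetric])
  from real_cond_exp_sigma_insert_null_sets[OF G this] show ?thesis
    unfolding integral_indicator_mult_indicator[OF G S] integral_indicator_mult_indicator[OF Gc S] .
qed

lemma measure_Int_AE_cases:
  assumes G: "G \<in> sets M" and T: "T \<in> sets M" and D: "D \<in> sets M"
    and D_cases: "AE x in M. (x \<in> D) = (a \<and> x \<in> G \<or> b \<and> x \<notin> G)"
  shows "prob (D \<inter> T) = of_bool a * prob (G \<inter> T) + of_bool b * prob ((space M - G) \<inter> T)"
proof -
  have Gc: "space M - G \<in> sets M" using G by auto
  have "integrable M (indicator T :: 'a \<Rightarrow> real)"
    using T by (simp add: emeasure_finite less_top[symmetric])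
  from integral_indicator_mult_AE_cases[OF G this D D_cases] show ?thesis
    unfolding integral_indicator_mult_indicator[OF D T] integral_indicator_mult_indicator[OF G T]
      integral_indicator_mult_indicator[OF Gc T] .
qed

lemma sets_sigma_null_sets:
  "sets (sigma (space M) (null_sets M)) = {C \<in> sets M. prob C = 0 \<or> prob C = 1}"
proof (intro set_eqI iffI)
  fix C assume "C \<in> sets (sigma (space M) (null_sets M))"
  then obtain b where C: "C \<in> sets M" and "AE x in M. (x \<in> C) = b"
    using sigma_insert_null_sets_AE_cases[of "{}" C] by (auto simp: insert_absorb)
  then show "C \<in> {C \<in> sets M. prob C = 0 \<or> prob C = 1}"
    by (cases b) (simp_all add: prob_eq_0 prob_eq_1)
next
  fix C assume "C \<in> {C \<in> sets M. prob C = 0 \<or> prob C = 1}"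
  then have C: "C \<in> sets M" and "C \<in> null_sets M \<or> space M - C \<in> null_sets M"
    by (auto simp: prob_compl emeasure_eq_measure null_sets_def)
  moreover have "C = space M - (space M - C)" using C sets.sets_into_space by blast
  ultimately have "C \<in> sigma_sets (space M) (null_sets M)"
    by (metis sigma_sets.Basic sigma_sets.Compl)
  then show "C \<in> sets (sigma (space M) (null_sets M))"
    using sets_sigma_insert_null_sets[of "{}"] by (simp add: insert_absorb)
qed

lemma sets_sigma_null_sets_subset:
  assumes "G \<in> sets M"
  shows "sets (sigma (space M) (null_sets M)) \<subseteq> sets (sigma (space M) (insert G (null_sets M)))"
proof -
  have "sigma_sets (space M) (null_sets M) \<subseteq> sigma_sets (space M) (insert G (null_sets M))"
    by (rule sigma_sets_mono') auto
  then show ?thesis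
    using sets_sigma_insert_null_sets[OF assms] sets_sigma_insert_null_sets[of "{}"]
    by (simp add: insert_absorb)
qed

lemma prob_compl_Int:
  assumes "G \<in> sets M" "T \<in> sets M"
  shows "prob ((space M - G) \<inter> T) = prob T - prob (G \<inter> T)"
proof -
  have "(space M - G) \<inter> T = T - G" using assms(2) sets.sets_into_space by blast
  then show ?thesis using finite_measure_Diff'[OF assms(2,1)] by (simp add: Int_commute)
qed

lemma real_cond_exp_indicator_sigma_null_sets:
  assumes "S \<in> sets M"
  shows "AE x in M. real_cond_exp M (sigma (space M) (null_sets M)) (indicator S) x = prob S"
  using real_cond_exp_indicator_sigma_insert_null_sets[of "{}" S] assms sets.sets_into_space
  by (simp add: insert_absorb prob_space Int_absorb1)

lemma cond_indep_sigma_insert_null_sets: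
  assumes G: "G \<in> sets M" and A: "A \<in> sets M" and B: "B \<in> sets M"
    and on_G: "prob (G \<inter> (A \<inter> B)) * prob G = prob (G \<inter> A) * prob (G \<inter> B)"
    and off_G: "prob ((space M - G) \<inter> (A \<inter> B)) * prob (space M - G) =
      prob ((space M - G) \<inter> A) * prob ((space M - G) \<inter> B)"
  shows "AE x in M. real_cond_exp M (sigma (space M) (insert G (null_sets M))) (indicator (A \<inter> B)) x =
    real_cond_exp M (sigma (space M) (insert G (null_sets M))) (indicator A) x *
    real_cond_exp M (sigma (space M) (insert G (null_sets M))) (indicator B) x"
proof -
  have quotient: "p / g = q / g * (r / g)" if "p * g = q * r" for p q r g :: real
    using that by (cases "g = 0") (simp_all add: field_simps)
  show ?thesis
    using real_cond_exp_indicator_sigma_insert_null_sets[OF G sets.Int[OF A B]]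
      real_cond_exp_indicator_sigma_insert_null_sets[OF G A]
      real_cond_exp_indicator_sigma_insert_null_sets[OF G B]
    by eventually_elim (use A B quotient[OF on_G] quotient[OF off_G] in auto)
qed

lemma weak_conv_if_sets_subset:
  assumes "\<And>n. sigma_finite_subalgebra M (Bs n)" and "\<And>n. sets B0 \<subseteq> sets (Bs n)"
  shows "weak_conv M Bs B0"
  unfolding weak_conv_def conv_in_prob_def
proof (intro ballI allI impI)
  fix C and e :: real assume C: "C \<in> sets B0" and "e > 0"
  have "measure M {x \<in> space M. e < \<bar>real_cond_exp M (Bs n) (indicator C) x - indicator C x\<bar>} = 0" for n
  proof -
    interpret Bn: sigma_finite_subalgebra M "Bs n" by (rule assms(1))
    have Cn: "C \<in> sets (Bs n)" using C assms(2) by blast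
    then have "C \<in> sets M" using Bn.subalg by (auto simp: subalgebra_def)
    then have "AE x in M. real_cond_exp M (Bs n) (indicator C) x = indicator C x"
      using Cn by (intro Bn.real_cond_exp_F_meas integrable_real_indicator)
        (auto simp: emeasure_finite less_top[symmetric])
    then have "emeasure M {x \<in> space M. e < \<bar>real_cond_exp M (Bs n) (indicator C) x - indicator C x\<bar>} = 0"
      using \<open>e > 0\<close> by (intro emeasure_eq_0_AE) (auto elim!: eventually_mono)
    then show ?thesis by (simp add: measure_def)
  qed
  then show "(\<lambda>n. measure M {x \<in> space M. e < \<bar>real_cond_exp M (Bs n) (indicator C) x - indicator C x\<bar>})
      \<longlonglongrightarrow> 0"
    by simp
qed

end

lemma BP_field_superset:
  assumes "sets B0 \<subseteq> sets M" and "\<And>n. sets B0 \<subseteq> sets (Bs n)"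
  shows "sets B0 \<subseteq> BP_field M Bs"
proof
  fix C assume C: "C \<in> sets B0"
  have "(INF D\<in>sets (Bs n). measure M (sym_diff C D)) = 0" for n
  proof (rule antisym)
    have "C \<in> sets (Bs n)" using C assms(2) by blast
    moreover have "bdd_below ((\<lambda>D. measure M (sym_diff C D)) ` sets (Bs n))"
      by (rule bdd_belowI2[of _ 0]) simp
    ultimately show "(INF D\<in>sets (Bs n). measure M (sym_diff C D)) \<le> 0"
      using cINF_lower[of "\<lambda>D. measure M (sym_diff C D)" "sets (Bs n)" C] by simp
    show "0 \<le> (INF D\<in>sets (Bs n). measure M (sym_diff C D))"
      using \<open>C \<in> sets (Bs n)\<close> by (intro cINF_greatest) auto
  qed
  then show "C \<in> BP_field M Bs" using C assms(1) by (auto simp: BP_field_def)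
qed

lemma BP_field_approx:
  assumes "C \<in> BP_field M Bs" and "0 < e"
  shows "\<forall>\<^sub>F n in sequentially. \<exists>D\<in>sets (Bs n). measure M (sym_diff C D) < e"
proof -
  have "\<forall>\<^sub>F n in sequentially. (INF D\<in>sets (Bs n). measure M (sym_diff C D)) < e"
    using assms by (intro order_tendstoD(2)) (auto simp: BP_field_def)
  then show ?thesis
  proof eventually_elim
    case (elim n)
    have "bdd_below ((\<lambda>D. measure M (sym_diff C D)) ` sets (Bs n))"
      by (rule bdd_belowI2[of _ 0]) simp
    then show ?case using elim cINF_less_iff[of "sets (Bs n)"] by blast
  qed
qed

section \<open>Lebesgue measure on [0,1) and the dyadic sets Bset n\<close>

lemma space_PP[simp]: "space PP = {0..<1}"
  unfolding PP_def by (simp add: space_restrict_space)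

lemma sets_PP_iff: "A \<in> sets PP \<longleftrightarrow> A \<subseteq> {0..<1} \<and> A \<in> sets borel"
  unfolding PP_def by (subst sets_restrict_space_iff) auto

lemma prob_space_PP: "prob_space PP"
  unfolding PP_def by (rule prob_space_restrict_space) auto

interpretation P: prob_space PP by (rule prob_space_PP)

lemma measure_PP_Ico: "0 \<le> a \<Longrightarrow> a \<le> b \<Longrightarrow> b \<le> 1 \<Longrightarrow> measure PP {a..<b} = b - a"
  unfolding PP_def by (subst measure_restrict_space) auto

definition dyadic_interval :: "nat \<Rightarrow> nat \<Rightarrow> real set" where
  "dyadic_interval n j = {real j / 2^n ..< (real j + 1) / 2^n}"

lemma dyadic_interval_subset:
  assumes "j < 2^n"
  shows "dyadic_interval n j \<subseteq> {0..<1}"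
proof -
  have "real j + 1 \<le> 2^n"
  proof -
    have "j + 1 \<le> (2::nat)^n" using assms by simp
    then have "real (j + 1) \<le> real ((2::nat)^n)" by (simp only: of_nat_le_iff)
    then show ?thesis by simp
  qed
  then show ?thesis by (auto simp: dyadic_interval_def)
qed

lemma mem_dyadic_interval_iff:
  "x \<in> dyadic_interval n j \<longleftrightarrow> real j \<le> 2^n * x \<and> 2^n * x < real j + 1"
  by (simp add: dyadic_interval_def pos_divide_le_eq pos_less_divide_eq mult.commute)

lemma measure_dyadic_interval:
  assumes "j < 2^n"
  shows "measure PP (dyadic_interval n j) = 1 / 2^n"
proof -
  have "real j / 2^n \<le> (real j + 1) / 2^n" by (simp add: divide_right_mono)
  then show ?thesis
    using dyadic_interval_subset[OF assms] unfolding dyadic_interval_def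
    by (subst measure_PP_Ico) (auto simp flip: diff_divide_distrib)
qed

lemma Bset_eq: "Bset n = (\<Union>k<2^(n-2). dyadic_interval n (2 * k))"
  by (auto simp: Bset_def dyadic_interval_def)

lemma Bset_sets: "Bset n \<in> sets PP"
proof -
  have "2 * k < 2^n" if "k < 2^(n-2)" for k :: nat
  proof (cases "n < 2")
    case True
    then show ?thesis using that by (cases n) auto
  next
    case False
    then obtain m where "n = m + 2" by (metis add.commute le_Suc_ex not_less)
    then show ?thesis using that by simp
  qed
  then have "Bset n \<subseteq> {0..<1}"
    unfolding Bset_eq using dyadic_interval_subset by blast
  then show ?thesis unfolding sets_PP_iff Bset_eq dyadic_interval_def by auto
qed

lemma mem_Bset_iff:
  assumes n: "n \<ge> 2" and x: "x \<in> dyadic_interval n j"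
  shows "x \<in> Bset n \<longleftrightarrow> even j \<and> j < 2^(n-1)"
proof -
  have "(x \<in> dyadic_interval n i) = (i = j)" for i
  proof
    assume "x \<in> dyadic_interval n i"
    with x have "real j < real i + 1" "real i < real j + 1"
      unfolding mem_dyadic_interval_iff by linarith+
    then show "i = j" by linarith
  qed (use x in simp)
  moreover obtain m where "n = m + 2" using n by (metis add.commute le_Suc_ex)
  then have "(2::nat)^(n-1) = 2 * 2^(n-2)" by simp
  ultimately show ?thesis
    unfolding Bset_eq by (auto elim!: evenE)
qed

lemma dyadic_interval_Suc:
  "dyadic_interval n j = dyadic_interval (Suc n) (2 * j) \<union> dyadic_interval (Suc n) (2 * j + 1)"
  by (auto simp: dyadic_interval_def field_simps)

lemma atLeastLessThan_Suc_dyadic: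
  "{0..<real (Suc j) / 2^n} = {0..<real j / 2^n} \<union> dyadic_interval n j"
proof -
  have nonneg: "0 \<le> real j / 2^n" and "real j / 2^n \<le> (real j + 1) / 2^n"
    by (simp_all add: divide_right_mono)
  then show ?thesis by (auto simp: dyadic_interval_def add.commute dest: order_trans[OF nonneg])
qed

lemma measure_Int_Bset_lessThan:
  assumes n: "n \<ge> 2" and S: "S \<in> sets PP"
    and S_dyadic: "\<And>j. even j \<Longrightarrow> j < 2^(n-1) \<Longrightarrow> measure PP (S \<inter> dyadic_interval n j) = c"
  shows "j \<le> 2^(n-1) \<Longrightarrow> measure PP (S \<inter> Bset n \<inter> {0..<real j / 2^n}) = real ((j + 1) div 2) * c"
proof (induction j)
  case (Suc j)
  then have j: "j < 2^(n-1)" by simp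
  have "S \<inter> Bset n \<inter> dyadic_interval n j = (if even j then S \<inter> dyadic_interval n j else {})"
    using mem_Bset_iff[OF n, of _ j] j by auto
  then have "S \<inter> Bset n \<inter> {0..<real (Suc j) / 2^n} =
      S \<inter> Bset n \<inter> {0..<real j / 2^n} \<union> (if even j then S \<inter> dyadic_interval n j else {})"
    unfolding atLeastLessThan_Suc_dyadic by blast
  moreover have "S \<inter> Bset n \<inter> {0..<real j / 2^n} \<in> sets PP" "S \<inter> dyadic_interval n j \<in> sets PP"
    using S Bset_sets[of n] by (auto simp: sets_PP_iff dyadic_interval_def)
  ultimately have "measure PP (S \<inter> Bset n \<inter> {0..<real (Suc j) / 2^n}) =
      measure PP (S \<inter> Bset n \<inter> {0..<real j / 2^n}) +
      measure PP (if even j then S \<inter> dyadic_interval n j else {})"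
    by (simp only:, intro P.finite_measure_Union) (auto simp: dyadic_interval_def)
  then have "measure PP (S \<inter> Bset n \<inter> {0..<real (Suc j) / 2^n}) =
      measure PP (S \<inter> Bset n \<inter> {0..<real j / 2^n}) + (if even j then c else 0)"
    using S_dyadic[OF _ j] by simp
  then show ?case
    using Suc j by (cases "even j") (auto elim!: evenE oddE simp: algebra_simps)
qed simp

lemma measure_Bset_Int_lessThan:
  assumes n: "n \<ge> 2" and j: "j \<le> 2^(n-1)"
  shows "measure PP (Bset n \<inter> {0..<real j / 2^n}) = real ((j + 1) div 2) / 2^n"
proof -
  have "measure PP ({0..<1} \<inter> dyadic_interval n i) = 1 / 2^n" if "i < 2^(n-1)" for i
  proof -
    have "i < 2^n" using that by (meson diff_le_self less_le_trans one_le_numeral power_increasing)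
    then show ?thesis using dyadic_interval_subset measure_dyadic_interval by (simp add: Int_absorb1)
  qed
  from measure_Int_Bset_lessThan[OF n _ this j] show ?thesis
    using Bset_sets[of n] by (simp add: sets_PP_iff Int_absorb1)
qed

lemma Bset_subset_lessThan_dyadic_half:
  assumes "n \<ge> 2"
  shows "Bset n \<subseteq> {0..<real (2^(n-1)) / 2^n}"
proof
  fix x assume "x \<in> Bset n"
  then obtain k where k: "k < 2^(n-2)" and x: "x \<in> dyadic_interval n (2 * k)"
    unfolding Bset_eq by blast
  obtain m where "n = m + 2" using assms by (metis add.commute le_Suc_ex)
  with k have "2 * k + 1 \<le> (2::nat)^(n-1)" by simp
  then have "real (2 * k + 1) / 2^n \<le> real (2^(n-1)) / 2^n"
    by (intro divide_right_mono) (simp_all only: of_nat_le_iff, simp)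
  moreover have "x \<in> {0..<real (Suc (2 * k)) / 2^n}"
    using x atLeastLessThan_Suc_dyadic[of "2 * k" n] by blast
  ultimately show "x \<in> {0..<real (2^(n-1)) / 2^n}"
    by simp
qed

lemma measure_Bset:
  assumes n: "n \<ge> 2"
  shows "measure PP (Bset n) = 1 / 4"
proof -
  obtain m where m: "n = m + 2" using n by (metis add.commute le_Suc_ex)
  have "measure PP (Bset n) = measure PP (Bset n \<inter> {0..<real (2^(n-1)) / 2^n})"
    using Bset_subset_lessThan_dyadic_half[OF n] by (simp add: Int_absorb2)
  also have "\<dots> = real ((2^(n-1) + 1) div 2) / 2^n"
    by (rule measure_Bset_Int_lessThan[OF n]) simp
  also have "\<dots> = 1 / 4" unfolding m by simp
  finally show ?thesis .
qed

lemma measure_Bset_Suc_Int_Bset: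
  assumes n: "n \<ge> 2"
  shows "measure PP (Bset (Suc n) \<inter> Bset n) = 1 / 8"
proof -
  obtain m where m: "n = m + 2" using n by (metis add.commute le_Suc_ex)
  have "measure PP (Bset (Suc n) \<inter> dyadic_interval n j) = 1 / 2^(Suc n)"
    if "even j" "j < 2^(n-1)" for j
  proof -
    have j: "2 * j < 2^n" "2 * j < 2^(Suc n)"
      using \<open>j < 2^(n-1)\<close> unfolding m by simp_all
    have "x \<in> Bset (Suc n)" if "x \<in> dyadic_interval (Suc n) (2 * j)" for x
      using mem_Bset_iff[of "Suc n" x "2 * j"] n that j by simp
    moreover have "x \<notin> Bset (Suc n)" if "x \<in> dyadic_interval (Suc n) (2 * j + 1)" for x
      using mem_Bset_iff[of "Suc n" x "2 * j + 1"] n that by simp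
    ultimately have "Bset (Suc n) \<inter> dyadic_interval n j = dyadic_interval (Suc n) (2 * j)"
      using dyadic_interval_Suc[of n j] by blast
    then show ?thesis using measure_dyadic_interval[OF j(2)] by simp
  qed
  from measure_Int_Bset_lessThan[OF n Bset_sets this, of "2^(n-1)"]
  have "measure PP (Bset (Suc n) \<inter> Bset n \<inter> {0..<real (2^(n-1)) / 2^n}) =
      real ((2^(n-1) + 1) div 2) / 2^(Suc n)"
    by simp
  moreover have "real ((2^(n-1) + 1) div 2) / 2^(Suc n) = (1 / 8 :: real)"
    unfolding m by simp
  ultimately show ?thesis
    using Bset_subset_lessThan_dyadic_half[OF n] by (simp add: Int_absorb2 Int_assoc)
qed

lemma measure_Bset_Int_sixteenths:
  assumes n: "n \<ge> 4" and "odd p" "odd q" "q \<le> p" "p \<le> 8"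
  shows "measure PP (Bset n \<inter> {real q / 16..<real p / 16}) = (real p - real q) / 32"
proof -
  obtain m where m: "n = m + 4" using n by (metis add.commute le_Suc_ex)
  have n2: "n \<ge> 2" using n by simp
  have scale: "real r / 16 = real (r * 2^m) / 2^n" for r
    unfolding m by (simp add: power_add)
  have count: "real ((r * 2^m + 1) div 2) = (real r * 2^m + of_bool (m = 0)) / 2" if "odd r" for r
  proof -
    have "2 * ((r * 2^m + 1) div 2) = r * 2^m + of_bool (m = 0)"
      using that by (cases m) (auto elim!: oddE)
    then have "real (2 * ((r * 2^m + 1) div 2)) = real (r * 2^m + of_bool (m = 0))" by (rule arg_cong)
    then show ?thesis by simp
  qed
  have p: "p * 2^m \<le> 2^(n-1)" and q: "q * 2^m \<le> 2^(n-1)"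
    using \<open>q \<le> p\<close> \<open>p \<le> 8\<close> unfolding m by (simp_all add: power_add)
  have "{0..<real p / 16} = {0..<real q / 16} \<union> {real q / 16..<real p / 16}"
    using \<open>q \<le> p\<close> by (intro ivl_disj_un_two(3)[symmetric]) auto
  then have "measure PP (Bset n \<inter> {0..<real p / 16}) =
      measure PP (Bset n \<inter> {0..<real q / 16}) + measure PP (Bset n \<inter> {real q / 16..<real p / 16})"
    using Bset_sets[of n]
    by (simp only: Int_Un_distrib, intro P.finite_measure_Union) (auto simp: sets_PP_iff)
  moreover have initial: "measure PP (Bset n \<inter> {0..<real r / 16}) = (real r * 2^m + of_bool (m = 0)) / 2^(n+1)"
    if "odd r" "r * 2^m \<le> 2^(n-1)" for r
    unfolding scale measure_Bset_Int_lessThan[OF n2 that(2)] count[OF that(1)] by simp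
  ultimately have "measure PP (Bset n \<inter> {real q / 16..<real p / 16}) = (real p * 2^m - real q * 2^m) / 2^(n+1)"
    using initial[OF \<open>odd p\<close> p] initial[OF \<open>odd q\<close> q]
    unfolding add_divide_distrib diff_divide_distrib by linarith
  also have "\<dots> = (real p - real q) * 2^m / (32 * 2^m)"
    unfolding m by (simp add: power_add left_diff_distrib)
  finally show ?thesis by simp
qed

lemma Bset_subset_lessThan_half: "n \<ge> 2 \<Longrightarrow> Bset n \<subseteq> {0..<1/2}"
proof -
  assume n: "n \<ge> 2"
  then obtain m where "n = m + 2" by (metis add.commute le_Suc_ex)
  then have "real (2^(n-1)) / 2^n = (1/2 :: real)" by simp
  then show ?thesis using Bset_subset_lessThan_dyadic_half[OF n] by simp
qed

section \<open>The events Aset and Bset'\<close>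

lemma xx_bounds: "7/40 < xx" "xx < 3/16"
proof -
  have "12/5 < sqrt 6" by (rule real_less_rsqrt) (simp add: power2_eq_square)
  moreover have "sqrt 6 < 5/2" by (rule real_less_lsqrt) (auto simp: power2_eq_square)
  ultimately show "7/40 < xx" "xx < 3/16" unfolding xx_def by auto
qed

lemma xx_sq: "(1/8 + xx)^2 = 3/32"
proof -
  have "1/8 + xx = sqrt 6 / 8" unfolding xx_def by (simp add: field_simps)
  then have "(1/8 + xx)^2 = (sqrt 6)^2 / 8^2" by (simp only: power_divide)
  then show ?thesis by simp
qed

lemma Aset_sets: "Aset \<in> sets PP"
  unfolding Aset_def using xx_bounds by (auto simp: sets_PP_iff)

lemma Bset'_sets: "Bset' \<in> sets PP"
  unfolding Bset'_def using xx_bounds by (auto simp: sets_PP_iff)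

lemma measure_Aset: "measure PP Aset = 1/4 + xx"
proof -
  have "measure PP Aset = measure PP {3/16..<7/16} + measure PP {1-xx..<1}"
    unfolding Aset_def by (rule P.finite_measure_Union) (use xx_bounds in \<open>auto simp: sets_PP_iff\<close>)
  then show ?thesis using xx_bounds by (simp add: measure_PP_Ico)
qed

lemma measure_Bset': "measure PP Bset' = 1/4 + xx"
proof -
  have "measure PP Bset' = measure PP {1/16..<5/16} + measure PP {1-2*xx+1/16..<1-xx+1/16}"
    unfolding Bset'_def by (rule P.finite_measure_Union) (use xx_bounds in \<open>auto simp: sets_PP_iff\<close>)
  then show ?thesis using xx_bounds by (simp add: measure_PP_Ico)
qed

lemma measure_Aset_Int_Bset': "measure PP (Aset \<inter> Bset') = 3/16"
proof -
  have "Aset \<inter> Bset' = {3/16..<5/16} \<union> {1-xx..<1-xx+1/16}"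
    unfolding Aset_def Bset'_def using xx_bounds by auto
  moreover have "measure PP ({3/16..<5/16} \<union> {1-xx..<1-xx+1/16}) =
      measure PP {3/16..<5/16} + measure PP {1-xx..<1-xx+1/16}"
    by (rule P.finite_measure_Union) (use xx_bounds in \<open>auto simp: sets_PP_iff\<close>)
  ultimately have "measure PP (Aset \<inter> Bset') = measure PP {3/16..<5/16} + measure PP {1-xx..<1-xx+1/16}"
    by simp
  then show ?thesis using xx_bounds by (simp add: measure_PP_Ico)
qed

lemma Bset_Int_Aset: "n \<ge> 2 \<Longrightarrow> Bset n \<inter> Aset = Bset n \<inter> {real 3/16..<real 7/16}"
  using Bset_subset_lessThan_half[of n] xx_bounds by (auto simp: Aset_def)

lemma Bset_Int_Bset': "n \<ge> 2 \<Longrightarrow> Bset n \<inter> Bset' = Bset n \<inter> {real 1/16..<real 5/16}"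
  using Bset_subset_lessThan_half[of n] xx_bounds by (auto simp: Bset'_def)

lemma Bset_Int_Aset_Int_Bset':
  "n \<ge> 2 \<Longrightarrow> Bset n \<inter> (Aset \<inter> Bset') = Bset n \<inter> {real 3/16..<real 5/16}"
  using Bset_subset_lessThan_half[of n] xx_bounds by (auto simp: Aset_def Bset'_def)

lemma measure_Bset_Int_Aset: "n \<ge> 4 \<Longrightarrow> measure PP (Bset n \<inter> Aset) = 1/8"
  using measure_Bset_Int_sixteenths[of n 7 3] by (simp add: Bset_Int_Aset)

lemma measure_Bset_Int_Bset': "n \<ge> 4 \<Longrightarrow> measure PP (Bset n \<inter> Bset') = 1/8"
  using measure_Bset_Int_sixteenths[of n 5 1] by (simp add: Bset_Int_Bset')

lemma measure_Bset_Int_Aset_Int_Bset': "n \<ge> 4 \<Longrightarrow> measure PP (Bset n \<inter> (Aset \<inter> Bset')) = 1/16"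
  using measure_Bset_Int_sixteenths[of n 5 3] by (simp add: Bset_Int_Aset_Int_Bset')

section \<open>The sigma-fields Bfield n\<close>

lemma sets_B0field: "sets B0field = {C \<in> sets PP. measure PP C = 0 \<or> measure PP C = 1}"
  unfolding B0field_def by (rule P.sets_sigma_null_sets)

lemma sets_B0field_subset_Bfield: "sets B0field \<subseteq> sets (Bfield n)"
  unfolding B0field_def Bfield_def by (rule P.sets_sigma_null_sets_subset[OF Bset_sets])

lemma weak_conv_Bfield: "weak_conv PP Bfield B0field"
  using P.sigma_finite_subalgebra_sigma_insert_null_sets[OF Bset_sets] sets_B0field_subset_Bfield
  unfolding Bfield_def by (rule P.weak_conv_if_sets_subset)

\<comment> \<open>Measured on the whole space and on Bset n, an atom of Bfield n and an atom of
  Bfield (Suc n) differ by at least 1/8 unless both are trivial.\<close>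
lemma Bfield_Suc_approx_trivial:
  assumes n: "n \<ge> 2" and C: "C \<in> sets PP" and e: "e \<le> 1/16"
    and D1: "D1 \<in> sets (Bfield n)" "measure PP (sym_diff C D1) < e"
    and D2: "D2 \<in> sets (Bfield (Suc n))" "measure PP (sym_diff C D2) < e"
  shows "measure PP C < e \<or> 1 - measure PP C < e"
proof -
  let ?G1 = "Bset n" and ?G2 = "Bset (Suc n)"
  have G1: "?G1 \<in> sets PP" and G2: "?G2 \<in> sets PP" by (rule Bset_sets)+
  obtain a1 b1 where D1s: "D1 \<in> sets PP" and ab1: "AE x in PP. (x \<in> D1) = (a1 \<and> x \<in> ?G1 \<or> b1 \<and> x \<notin> ?G1)"
    using P.sigma_insert_null_sets_AE_cases[OF G1, of D1] D1 unfolding Bfield_def by blast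
  obtain a2 b2 where D2s: "D2 \<in> sets PP" and ab2: "AE x in PP. (x \<in> D2) = (a2 \<and> x \<in> ?G2 \<or> b2 \<and> x \<notin> ?G2)"
    using P.sigma_insert_null_sets_AE_cases[OF G2, of D2] D2 unfolding Bfield_def by blast
  have G1_meas: "measure PP ?G1 = 1/4" "measure PP ?G2 = 1/4" "measure PP (?G2 \<inter> ?G1) = 1/8"
    using measure_Bset n measure_Bset_Suc_Int_Bset[OF n] by auto
  have one: "measure PP {0..<1} = 1" using P.prob_space by simp
  have sp: "space PP \<in> sets PP" "?G1 \<inter> space PP = ?G1" "?G2 \<inter> space PP = ?G2"
    using G1 G2 by (auto simp: sets_PP_iff)
  have v1: "measure PP (D1 \<inter> space PP) = of_bool a1 * (1/4) + of_bool b1 * (3/4)"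
    using P.measure_Int_AE_cases[OF G1 sp(1) D1s ab1] P.prob_compl_Int[OF G1 sp(1)] G1_meas sp one by simp
  have v2: "measure PP (D1 \<inter> ?G1) = of_bool a1 * (1/4)"
    using P.measure_Int_AE_cases[OF G1 G1 D1s ab1] G1_meas by (simp add: Int_commute)
  have v3: "measure PP (D2 \<inter> space PP) = of_bool a2 * (1/4) + of_bool b2 * (3/4)"
    using P.measure_Int_AE_cases[OF G2 sp(1) D2s ab2] P.prob_compl_Int[OF G2 sp(1)] G1_meas sp one by simp
  have v4: "measure PP (D2 \<inter> ?G1) = of_bool a2 * (1/8) + of_bool b2 * (1/8)"
    using P.measure_Int_AE_cases[OF G2 G1 D2s ab2] P.prob_compl_Int[OF G2 G1] G1_meas by (simp add: Int_commute)
  have "measure PP (sym_diff D1 D2) < 2 * e"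
    using P.measure_sym_diff_triangle[OF D1s C D2s] D1(2) D2(2) by (simp add: Un_commute)
  then have t1: "\<bar>measure PP (D1 \<inter> space PP) - measure PP (D2 \<inter> space PP)\<bar> < 2 * e"
    and t2: "\<bar>measure PP (D1 \<inter> ?G1) - measure PP (D2 \<inter> ?G1)\<bar> < 2 * e"
    using P.measure_Int_sym_diff_le[OF D1s D2s] sp(1) G1 by (smt (verit))+
  have "a1 = b1"
    using t1 t2 e unfolding v1 v2 v3 v4
    by (cases a1; cases b1; cases a2; cases b2) (simp_all add: abs_less_iff)
  moreover have "\<bar>measure PP (C \<inter> space PP) - measure PP (D1 \<inter> space PP)\<bar> < e"
    using P.measure_Int_sym_diff_le[OF C D1s sp(1)] D1(2) by linarith
  moreover have "C \<inter> {0..<1} = C" using C by (auto simp: sets_PP_iff)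
  ultimately show ?thesis
    unfolding v1 by (cases a1) (auto simp: abs_less_iff)
qed

lemma BP_field_Bfield_subset: "BP_field PP Bfield \<subseteq> sets B0field"
proof
  fix C assume BP: "C \<in> BP_field PP Bfield"
  then have C: "C \<in> sets PP" by (simp add: BP_field_def)
  have nearly_trivial: "measure PP C < e \<or> 1 - measure PP C < e" if "0 < e" "e \<le> 1/16" for e
  proof -
    obtain N where N: "\<And>n. n \<ge> N \<Longrightarrow> \<exists>D\<in>sets (Bfield n). measure PP (sym_diff C D) < e"
      using BP_field_approx[OF BP \<open>0 < e\<close>] unfolding eventually_sequentially by blast
    have "\<exists>D\<in>sets (Bfield (max N 2)). measure PP (sym_diff C D) < e"
      and "\<exists>D\<in>sets (Bfield (Suc (max N 2))). measure PP (sym_diff C D) < e"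
      using N by auto
    then obtain D1 D2 where "D1 \<in> sets (Bfield (max N 2))" "measure PP (sym_diff C D1) < e"
      and "D2 \<in> sets (Bfield (Suc (max N 2)))" "measure PP (sym_diff C D2) < e"
      by blast
    then show ?thesis by (rule Bfield_Suc_approx_trivial[OF max.cobounded2 C \<open>e \<le> 1/16\<close>])
  qed
  have "measure PP C = 0 \<or> measure PP C = 1"
  proof (rule ccontr)
    define e where "e = min (1/16) (min (measure PP C) (1 - measure PP C))"
    assume "\<not> ?thesis"
    then have "0 < measure PP C" "measure PP C < 1"
      using measure_nonneg[of PP C] P.prob_le_1[of C] by linarith+
    then have "0 < e" "e \<le> measure PP C" "e \<le> 1 - measure PP C"
      unfolding e_def by auto
    moreover have "e \<le> 1/16" unfolding e_def by (rule min.cobounded1)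
    ultimately show False using nearly_trivial[of e] by linarith
  qed
  then show "C \<in> sets B0field" using C by (simp add: sets_B0field)
qed

lemma sets_B0field_eq_BP_field: "sets B0field = BP_field PP Bfield"
proof (rule antisym)
  show "sets B0field \<subseteq> BP_field PP Bfield"
    using sets_B0field sets_B0field_subset_Bfield by (intro BP_field_superset) auto
qed (rule BP_field_Bfield_subset)

lemma cond_indep_Bfield:
  assumes n: "n \<ge> 4"
  shows "AE \<omega> in PP. real_cond_exp PP (Bfield n) (indicator (Aset \<inter> Bset')) \<omega> =
    real_cond_exp PP (Bfield n) (indicator Aset) \<omega> * real_cond_exp PP (Bfield n) (indicator Bset') \<omega>"
  unfolding Bfield_def
proof (rule P.cond_indep_sigma_insert_null_sets[OF Bset_sets Aset_sets Bset'_sets])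
  have AB: "Aset \<inter> Bset' \<in> sets PP" using Aset_sets Bset'_sets by auto
  show "measure PP (Bset n \<inter> (Aset \<inter> Bset')) * measure PP (Bset n) =
      measure PP (Bset n \<inter> Aset) * measure PP (Bset n \<inter> Bset')"
    using n by (simp add: measure_Bset measure_Bset_Int_Aset measure_Bset_Int_Bset'
      measure_Bset_Int_Aset_Int_Bset')
  have off: "measure PP ((space PP - Bset n) \<inter> (Aset \<inter> Bset')) = 1/8"
    "measure PP (space PP - Bset n) = 3/4"
    "measure PP ((space PP - Bset n) \<inter> Aset) = 1/8 + xx"
    "measure PP ((space PP - Bset n) \<inter> Bset') = 1/8 + xx"
    using P.prob_compl_Int[OF Bset_sets AB] P.prob_compl_Int[OF Bset_sets Aset_sets]
      P.prob_compl_Int[OF Bset_sets Bset'_sets] P.prob_compl[OF Bset_sets] n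
    by (simp_all add: measure_Bset measure_Bset_Int_Aset measure_Bset_Int_Bset'
      measure_Bset_Int_Aset_Int_Bset' measure_Aset measure_Bset' measure_Aset_Int_Bset')
  show "measure PP ((space PP - Bset n) \<inter> (Aset \<inter> Bset')) * measure PP (space PP - Bset n) =
      measure PP ((space PP - Bset n) \<inter> Aset) * measure PP ((space PP - Bset n) \<inter> Bset')"
    unfolding off using xx_sq by (simp add: power2_eq_square)
qed

lemma not_indep_Aset_Bset': "measure PP (Aset \<inter> Bset') \<noteq> measure PP Aset * measure PP Bset'"
proof
  assume "measure PP (Aset \<inter> Bset') = measure PP Aset * measure PP Bset'"
  then have "3/16 = (1/4 + xx) * (1/4 + xx)"
    by (simp add: measure_Aset measure_Bset' measure_Aset_Int_Bset')
  also have "\<dots> = (1/8 + xx)^2 + (1/8 + xx)/4 + 1/64"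
    by (simp add: power2_eq_square field_simps)
  finally have "3/16 = 3/32 + (1/8 + xx)/4 + (1/64 :: real)" unfolding xx_sq .
  then have "xx = 3/16" by (simp add: field_simps)
  then show False using xx_bounds by simp
qed

lemma not_cond_indep_B0field:
  "\<not> (AE \<omega> in PP. real_cond_exp PP B0field (indicator (Aset \<inter> Bset')) \<omega> =
    real_cond_exp PP B0field (indicator Aset) \<omega> * real_cond_exp PP B0field (indicator Bset') \<omega>)"
proof
  assume "AE \<omega> in PP. real_cond_exp PP B0field (indicator (Aset \<inter> Bset')) \<omega> =
    real_cond_exp PP B0field (indicator Aset) \<omega> * real_cond_exp PP B0field (indicator Bset') \<omega>"
  then have "AE \<omega> in PP. measure PP (Aset \<inter> Bset') = measure PP Aset * measure PP Bset'"
    using P.real_cond_exp_indicator_sigma_null_sets[OF sets.Int[OF Aset_sets Bset'_sets]]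
      P.real_cond_exp_indicator_sigma_null_sets[OF Aset_sets]
      P.real_cond_exp_indicator_sigma_null_sets[OF Bset'_sets]
    unfolding B0field_def by eventually_elim simp
  then show False using not_indep_Aset_Bset' by simp
qed

theorem mainTheorem2:
  shows "weak_conv PP Bfield B0field
    \<and> sets B0field = BP_field PP Bfield
    \<and> (\<forall>n\<ge>4. AE \<omega> in PP.
          real_cond_exp PP (Bfield n) (indicator (Aset \<inter> Bset')) \<omega>
        = real_cond_exp PP (Bfield n) (indicator Aset) \<omega> * real_cond_exp PP (Bfield n) (indicator Bset') \<omega>)
    \<and> measure PP (Aset \<inter> Bset') \<noteq> measure PP Aset * measure PP Bset'
    \<and> \<not> (AE \<omega> in PP.
          real_cond_exp PP B0field (indicator (Aset \<inter> Bset')) \<omega>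
        = real_cond_exp PP B0field (indicator Aset) \<omega> * real_cond_exp PP B0field (indicator Bset') \<omega>)"
  using weak_conv_Bfield sets_B0field_eq_BP_field cond_indep_Bfield not_indep_Aset_Bset'
    not_cond_indep_B0field
  by blast

end
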